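(* Let $x$ be a point in a model $M$. The following are equivalent: (1) $x$ is separated; (2) there exists a $(\wedge,\to)$-formula $\varphi$ such that $x$ is a $\varphi$-border point, i.e. $x\not\models\varphi$ while every $y>x$ satisfies $\varphi$.
   Context: Fix $n\ge 1$ and propositional variables $p_1,\dots,p_n$; $2^n=\{0,1\}^n$ with componentwise order. A model is $(M,\le,c)$ with $(M,\le)$ a poset and $c:M\to 2^n$ order-preserving, with the usual intuitionistic Kripke semantics ($x\models p_i$ iff $c(x)_i=1$; $x\models\varphi\to\psi$ iff for all $y\ge x$, $y\models\varphi$ implies $y\models\psi$; etc.). Write $v(\varphi)=\{x: x\models\varphi\}$. A $(\wedge,\to)$-formula is a formula built from $p_1,\dots,p_n$ using only $\wedge$ and $\to$. For an up-set $A$, a border point of $A$ is a maximal element of $M\setminus A$; $x$ is a $\varphi$-border point if it is a border point of $v(\varphi)$. A point is separated if it is a $q$-border point for some propositional variable $q$. *)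

theory Defs
  imports Main
begin

text \<open>Propositional variables p_1,...,p_n are represented as Var 0, ..., Var (n-1).\<close>
datatype form = Var nat | Bot | Conj form form | Disj form form | Imp form form

fun vars :: "form \<Rightarrow> nat set" where
  "vars (Var i) = {i}"
| "vars Bot = {}"
| "vars (Conj a b) = vars a \<union> vars b"
| "vars (Disj a b) = vars a \<union> vars b"
| "vars (Imp a b) = vars a \<union> vars b"

fun conj_imp :: "form \<Rightarrow> bool" where
  "conj_imp (Var i) = True"
| "conj_imp Bot = False"
| "conj_imp (Conj a b) = (conj_imp a \<and> conj_imp b)"
| "conj_imp (Disj a b) = False"
| "conj_imp (Imp a b) = (conj_imp a \<and> conj_imp b)"

definition is_model :: "nat \<Rightarrow> 'a set \<Rightarrow> ('a \<Rightarrow> 'a \<Rightarrow> bool) \<Rightarrow> ('a \<Rightarrow> nat \<Rightarrow> bool) \<Rightarrow> bool" where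
  "is_model n M le c \<longleftrightarrow>
     (\<forall>x\<in>M. le x x) \<and>
     (\<forall>x\<in>M. \<forall>y\<in>M. le x y \<and> le y x \<longrightarrow> x = y) \<and>
     (\<forall>x\<in>M. \<forall>y\<in>M. \<forall>z\<in>M. le x y \<and> le y z \<longrightarrow> le x z) \<and>
     (\<forall>x\<in>M. \<forall>y\<in>M. \<forall>i<n. le x y \<and> c x i \<longrightarrow> c y i)"

fun sat :: "'a set \<Rightarrow> ('a \<Rightarrow> 'a \<Rightarrow> bool) \<Rightarrow> ('a \<Rightarrow> nat \<Rightarrow> bool) \<Rightarrow> 'a \<Rightarrow> form \<Rightarrow> bool" where
  "sat M le c x (Var i) = c x i"
| "sat M le c x Bot = False"
| "sat M le c x (Conj a b) = (sat M le c x a \<and> sat M le c x b)"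
| "sat M le c x (Disj a b) = (sat M le c x a \<or> sat M le c x b)"
| "sat M le c x (Imp a b) = (\<forall>y\<in>M. le x y \<longrightarrow> sat M le c y a \<longrightarrow> sat M le c y b)"

definition val :: "'a set \<Rightarrow> ('a \<Rightarrow> 'a \<Rightarrow> bool) \<Rightarrow> ('a \<Rightarrow> nat \<Rightarrow> bool) \<Rightarrow> form \<Rightarrow> 'a set" where
  "val M le c \<phi> = {x\<in>M. sat M le c x \<phi>}"

definition border_point :: "'a set \<Rightarrow> ('a \<Rightarrow> 'a \<Rightarrow> bool) \<Rightarrow> 'a set \<Rightarrow> 'a \<Rightarrow> bool" where
  "border_point M le A x \<longleftrightarrow>
     x \<in> M - A \<and> (\<forall>y\<in>M - A. le x y \<longrightarrow> y = x)"

definition form_border_point :: "'a set \<Rightarrow> ('a \<Rightarrow> 'a \<Rightarrow> bool) \<Rightarrow> ('a \<Rightarrow> nat \<Rightarrow> bool) \<Rightarrow> form \<Rightarrow> 'a \<Rightarrow> bool" where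
  "form_border_point M le c \<phi> x \<longleftrightarrow> border_point M le (val M le c \<phi>) x"

definition separated :: "nat \<Rightarrow> 'a set \<Rightarrow> ('a \<Rightarrow> 'a \<Rightarrow> bool) \<Rightarrow> ('a \<Rightarrow> nat \<Rightarrow> bool) \<Rightarrow> 'a \<Rightarrow> bool" where
  "separated n M le c x \<longleftrightarrow> (\<exists>i<n. form_border_point M le c (Var i) x)"

end

theory Submission
  imports Defs
begin

text \<open>
  A separated point is trivially a border point of a (conjunction-implication)
  formula, namely of a variable.  For the converse we show that border points can only be
  inherited from subformulas:
  \<^item> a border point of a conjunction is a border point of one of its conjuncts, and
  \<^item> a border point of an implication whose antecedent is persistent is a border point of its
    consequent (the failure of the implication at x must be witnessed at x itself).
  Since every formula over the model's variables is persistent, an induction over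
  (conjunction-implication) formulas reduces any border point to a border point of one of
  the variables occurring in the formula.
\<close>

lemma form_border_point_iff:
  "form_border_point M le c \<phi> x \<longleftrightarrow>
     x \<in> M \<and> \<not> sat M le c x \<phi> \<and> (\<forall>y\<in>M. le x y \<and> y \<noteq> x \<longrightarrow> sat M le c y \<phi>)"
  unfolding form_border_point_def border_point_def val_def by auto

lemma model_refl: "is_model n M le c \<Longrightarrow> x \<in> M \<Longrightarrow> le x x"
  unfolding is_model_def by blast

lemma model_trans:
  "is_model n M le c \<Longrightarrow> x \<in> M \<Longrightarrow> y \<in> M \<Longrightarrow> z \<in> M \<Longrightarrow> le x y \<Longrightarrow> le y z \<Longrightarrow> le x z"
  unfolding is_model_def by blast

lemma model_colour_mono:
  "is_model n M le c \<Longrightarrow> i < n \<Longrightarrow> x \<in> M \<Longrightarrow> y \<in> M \<Longrightarrow> le x y \<Longrightarrow> c x i \<Longrightarrow> c y i"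
  unfolding is_model_def by blast

lemma sat_persistent:
  assumes model: "is_model n M le c"
    and "vars \<phi> \<subseteq> {..<n}" and "x \<in> M" and "y \<in> M" and "le x y" and "sat M le c x \<phi>"
  shows "sat M le c y \<phi>"
  using assms(2-)
proof (induction \<phi> arbitrary: x y)
  case (Var i)
  then show ?case using model_colour_mono[OF model] by simp
next
  case (Imp a b)
  then show ?case using model_trans[OF model, of x y] by simp
qed (simp_all, blast)

lemma border_point_Conj:
  assumes "form_border_point M le c (Conj a b) x"
  shows "form_border_point M le c a x \<or> form_border_point M le c b x"
  using assms unfolding form_border_point_iff by auto

text \<open>A border point of an implication with persistent antecedent is a border point of the
  consequent: a witness of failure above x would, if different from x, satisfy the
  implication, so x itself satisfies the antecedent and fails the consequent.\<close>
lemma border_point_Imp: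
  assumes model: "is_model n M le c" and vars_a: "vars a \<subseteq> {..<n}"
    and border: "form_border_point M le c (Imp a b) x"
  shows "form_border_point M le c b x"
proof -
  have x: "x \<in> M" and fails: "\<not> sat M le c x (Imp a b)"
    and above: "\<And>y. y \<in> M \<Longrightarrow> le x y \<Longrightarrow> y \<noteq> x \<Longrightarrow> sat M le c y (Imp a b)"
    using border unfolding form_border_point_iff by auto
  obtain z where z: "z \<in> M" "le x z" "sat M le c z a" "\<not> sat M le c z b"
    using fails by auto
  have "z = x"
    using above[OF z(1,2)] model_refl[OF model z(1)] z by auto
  with z have xa: "sat M le c x a" and xb: "\<not> sat M le c x b" by auto
  have "sat M le c y b" if "y \<in> M" "le x y" "y \<noteq> x" for y
    using above[OF that] model_refl[OF model that(1)] sat_persistent[OF model vars_a x that(1,2) xa]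
      that(1) by auto
  with x xb show ?thesis unfolding form_border_point_iff by blast
qed

lemma border_point_variable:
  assumes model: "is_model n M le c"
    and "conj_imp \<phi>" and "vars \<phi> \<subseteq> {..<n}" and "form_border_point M le c \<phi> x"
  shows "\<exists>i\<in>vars \<phi>. form_border_point M le c (Var i) x"
  using assms(2-)
proof (induction \<phi>)
  case (Conj a b)
  from border_point_Conj[OF Conj.prems(3)] show ?case
    using Conj.IH Conj.prems(1,2) by auto
next
  case (Imp a b)
  have "form_border_point M le c b x"
    using border_point_Imp[OF model _ Imp.prems(3)] Imp.prems(2) by simp
  then show ?case
    using Imp.IH(2) Imp.prems(1,2) by auto
qed simp_all

theorem lemma3p4:
  fixes n :: nat and M :: "'a set" and le :: "'a \<Rightarrow> 'a \<Rightarrow> bool" and c :: "'a \<Rightarrow> nat \<Rightarrow> bool"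
  assumes "n \<ge> 1" and "is_model n M le c" and "x \<in> M"
  shows "separated n M le c x \<longleftrightarrow>
         (\<exists>\<phi>. conj_imp \<phi> \<and> vars \<phi> \<subseteq> {..<n} \<and> form_border_point M le c \<phi> x)"
proof
  assume "separated n M le c x"
  then obtain i where "i < n" "form_border_point M le c (Var i) x"
    unfolding separated_def by blast
  then show "\<exists>\<phi>. conj_imp \<phi> \<and> vars \<phi> \<subseteq> {..<n} \<and> form_border_point M le c \<phi> x"
    by (intro exI[of _ "Var i"]) simp
next
  assume "\<exists>\<phi>. conj_imp \<phi> \<and> vars \<phi> \<subseteq> {..<n} \<and> form_border_point M le c \<phi> x"
  then obtain \<phi> where "conj_imp \<phi>" "vars \<phi> \<subseteq> {..<n}" "form_border_point M le c \<phi> x"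
    by blast
  with border_point_variable[OF assms(2)] obtain i
    where "i \<in> vars \<phi>" "form_border_point M le c (Var i) x" by blast
  with \<open>vars \<phi> \<subseteq> {..<n}\<close> show "separated n M le c x"
    unfolding separated_def by blast
qed

end
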